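(* Let $(a,b,c)$ be a primitive Eisenstein triple, and let $m,n$ be positive coprime integers with $1\le m/n\le2$ and $3\nmid(m+n)$ such that either $(a,b,c)$ or $(b-a,b,c)$ equals $(m(2n-m),\ n(2m-n),\ m^2-mn+n^2)$. Let $\theta\in[\pi/3,\pi/2]$ satisfy $\cos\theta = |b-2a|/(2c)$, and define $$\Gamma_\theta = \begin{bmatrix}1&-\frac12\\0&\frac{\sqrt3}{2}\end{bmatrix}\begin{bmatrix} m & m-n\\ m-n & m\end{bmatrix}\mathbb{Z}^2 = \frac12\begin{bmatrix} m+n & m-2n\\ (m-n)\sqrt3 & m\sqrt3\end{bmatrix}\mathbb{Z}^2.$$ Then $\Gamma_\theta\in\mathrm{WR}(\Lambda_h)$, $C_h(\theta)$ is the set of all lattices in $\mathrm{WR}(\Lambda_h)$ similar to $\Gamma_\theta$, and $$|\Gamma_\theta| = c,\qquad \det\Gamma_\theta = b\frac{\sqrt3}{2},\qquad |\Lambda_h:\Gamma_\theta| = b.$$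
   Context: $\Lambda_h = \begin{bmatrix} 1 & -1/2 \\ 0 & \sqrt3/2\end{bmatrix}\mathbb{Z}^2$. For a full-rank lattice $\Gamma=A\mathbb{Z}^2\subset\mathbb{R}^2$, $\det\Gamma=|\det A|$, $|\Gamma|=\min\{\|y\|^2:y\in\Gamma\setminus\{0\}\}$, and for $\Gamma\subseteq\Lambda_h$, $|\Lambda_h:\Gamma|=\det\Gamma/\det\Lambda_h$. $\Gamma$ is well-rounded (WR) if it has a basis of vectors of squared norm $|\Gamma|$; such a basis can be chosen with angle in $[\pi/3,\pi/2]$ between its vectors, and this angle $\theta(\Gamma)$ is an invariant. $\mathrm{WR}(\Lambda_h)$ is the set of full-rank WR sublattices of $\Lambda_h$, $C_h(\theta)=\{\Omega\in\mathrm{WR}(\Lambda_h):\theta(\Omega)=\theta\}$. Lattices are similar if one is $\alpha A$ times the other for nonzero real $\alpha$ and $A\in O_2(\mathbb{R})$. An Eisenstein triple is $(a,b,c)\in\mathbb{Z}^3_{\ge0}\setminus\{0\}$ with $a^2-ab+b^2=c^2$; it is primitive if $a\le b$ and $\gcd(a,b,c)=1$. *)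

theory Defs
  imports "HOL-Analysis.Analysis"
begin

definition lat :: "real^2^2 \<Rightarrow> (real^2) set" where
  "lat A = range (\<lambda>z::int^2. A *v (\<chi> i. real_of_int (z $ i)))"

definition is_lattice :: "(real^2) set \<Rightarrow> bool" where
  "is_lattice L \<longleftrightarrow> (\<exists>A. det A \<noteq> 0 \<and> L = lat A)"

definition lattice_det :: "(real^2) set \<Rightarrow> real" where
  "lattice_det L = \<bar>det (SOME A. det A \<noteq> 0 \<and> L = lat A)\<bar>"

definition min_norm :: "(real^2) set \<Rightarrow> real" where
  "min_norm L = Inf {(norm y)^2 | y. y \<in> L \<and> y \<noteq> 0}"

definition lat_index :: "(real^2) set \<Rightarrow> (real^2) set \<Rightarrow> real" where
  "lat_index L G = lattice_det G / lattice_det L"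

definition Lambda_h_mat :: "real^2^2" where
  "Lambda_h_mat = vector [vector [1, -1/2], vector [0, sqrt 3 / 2]]"

definition Lambda_h :: "(real^2) set" where
  "Lambda_h = lat Lambda_h_mat"

definition vec_angle :: "real^2 \<Rightarrow> real^2 \<Rightarrow> real" where
  "vec_angle u v = arccos (inner u v / (norm u * norm v))"

definition min_basis :: "(real^2) set \<Rightarrow> real^2^2 \<Rightarrow> bool" where
  "min_basis L A \<longleftrightarrow> det A \<noteq> 0 \<and> L = lat A \<and>
     (norm (column 1 A))^2 = min_norm L \<and> (norm (column 2 A))^2 = min_norm L"

definition well_rounded :: "(real^2) set \<Rightarrow> bool" where
  "well_rounded L \<longleftrightarrow> is_lattice L \<and> (\<exists>A. min_basis L A)"

definition wr_angle :: "(real^2) set \<Rightarrow> real" where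
  "wr_angle L = (THE t. \<exists>A. min_basis L A \<and> vec_angle (column 1 A) (column 2 A) = t
                     \<and> pi/3 \<le> t \<and> t \<le> pi/2)"

definition WR_h :: "(real^2) set set" where
  "WR_h = {\<Omega>. well_rounded \<Omega> \<and> \<Omega> \<subseteq> Lambda_h}"

definition C_h :: "real \<Rightarrow> (real^2) set set" where
  "C_h \<theta> = {\<Omega> \<in> WR_h. wr_angle \<Omega> = \<theta>}"

definition similar_lat :: "(real^2) set \<Rightarrow> (real^2) set \<Rightarrow> bool" where
  "similar_lat L M \<longleftrightarrow> (\<exists>\<alpha> Q. \<alpha> \<noteq> 0 \<and> orthogonal_matrix Q \<and>
      L = (\<lambda>x. \<alpha> *\<^sub>R (Q *v x)) ` M)"

definition eisenstein_triple :: "int \<Rightarrow> int \<Rightarrow> int \<Rightarrow> bool" where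
  "eisenstein_triple a b c \<longleftrightarrow> a \<ge> 0 \<and> b \<ge> 0 \<and> c \<ge> 0 \<and> (a, b, c) \<noteq> (0, 0, 0)
      \<and> a^2 - a*b + b^2 = c^2"

definition primitive_eisenstein_triple :: "int \<Rightarrow> int \<Rightarrow> int \<Rightarrow> bool" where
  "primitive_eisenstein_triple a b c \<longleftrightarrow> eisenstein_triple a b c \<and> a \<le> b \<and> gcd (gcd a b) c = 1"

definition Gamma_mat :: "int \<Rightarrow> int \<Rightarrow> real^2^2" where
  "Gamma_mat m n = Lambda_h_mat ** vector [vector [real_of_int m, real_of_int (m - n)],
                                          vector [real_of_int (m - n), real_of_int m]]"

end

theory Submission
  imports Defs
begin

text \<open>A basis \<open>u, v\<close> with \<open>|u|\<^sup>2 = |v|\<^sup>2 = \<mu>\<close> and \<open>|u \<bullet> v| \<le> \<mu>/2\<close> realises the minimum of its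
  lattice, because \<open>|p u + q v|\<^sup>2 \<ge> \<mu> (p\<^sup>2 + q\<^sup>2 - |p q|) \<ge> \<mu>\<close> for integers \<open>(p, q) \<noteq> 0\<close>; conversely
  every minimal basis has this shape. Since the squared covolume \<open>det\<^sup>2 = \<mu>\<^sup>2 - (u \<bullet> v)\<^sup>2\<close> is an
  invariant of the lattice, the Gram matrix of a minimal basis is determined up to the sign of
  \<open>u \<bullet> v\<close>. So the angle invariant is \<open>arccos (|u \<bullet> v| / \<mu>)\<close>, and two well-rounded lattices with the
  same angle have proportional Gram matrices after flipping a basis vector, i.e. they are similar.
  The columns of \<open>\<Gamma>\<^sub>\<theta>\<close> have squared length \<open>m\<^sup>2 - mn + n\<^sup>2 = c\<close> and inner product
  \<open>(2m\<^sup>2 - 2mn - n\<^sup>2)/2 = \<plusminus>(b - 2a)/2\<close>, which lies in \<open>[-c/2, c/2]\<close> precisely because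
  \<open>n \<le> m \<le> 2n\<close>; the determinant is \<open>n(2m - n)\<surd>3/2 = b\<surd>3/2\<close>.\<close>

section \<open>Planar lattices in coordinates\<close>

lemma vec2_eq_iff: "(x::'a^2) = y \<longleftrightarrow> x $ 1 = y $ 1 \<and> x $ 2 = y $ 2"
  by (simp add: vec_eq_iff forall_2)

lemma matrix_vector_mult_2:
  "((A::'a::comm_semiring_1^2^2) *v x) $ i = A $ i $ 1 * x $ 1 + A $ i $ 2 * x $ 2"
  by (simp add: matrix_vector_mult_def sum_2)

lemma matrix_matrix_mult_2:
  "((A::'a::comm_semiring_1^2^2) ** B) $ i $ j = A $ i $ 1 * B $ 1 $ j + A $ i $ 2 * B $ 2 $ j"
  by (simp add: matrix_matrix_mult_def sum_2)

lemma inner_vec2: "(x::real^2) \<bullet> y = x $ 1 * y $ 1 + x $ 2 * y $ 2"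
  by (simp add: inner_vec_def sum_2)

lemma column_nth: "column j A $ i = A $ i $ j"
  by (simp add: column_def)

lemma det_2_columns:
  "det (A::real^2^2) = column 1 A $ 1 * column 2 A $ 2 - column 2 A $ 1 * column 1 A $ 2"
  by (simp add: det_2 column_nth)

lemma mem_lat_iff:
  "y \<in> lat A \<longleftrightarrow> (\<exists>p q::int. y = of_int p *\<^sub>R column 1 A + of_int q *\<^sub>R column 2 A)"
proof -
  have combination: "A *v (\<chi> i. real_of_int (z $ i)) =
      of_int (z $ 1) *\<^sub>R column 1 A + of_int (z $ 2) *\<^sub>R column 2 A" for z :: "int^2"
    by (simp add: vec2_eq_iff matrix_vector_mult_2 column_nth mult.commute)
  show ?thesis
  proof
    assume "y \<in> lat A"
    then show "\<exists>p q::int. y = of_int p *\<^sub>R column 1 A + of_int q *\<^sub>R column 2 A"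
      unfolding lat_def combination by blast
  next
    assume "\<exists>p q::int. y = of_int p *\<^sub>R column 1 A + of_int q *\<^sub>R column 2 A"
    then obtain p q :: int where "y = of_int p *\<^sub>R column 1 A + of_int q *\<^sub>R column 2 A"
      by blast
    then have "y = A *v (\<chi> i. real_of_int ((\<chi> i. if i = 1 then p else q) $ i))"
      unfolding combination by simp
    then show "y \<in> lat A" unfolding lat_def by blast
  qed
qed

lemma column_in_lat: "column j A \<in> lat A"
proof -
  have "column j A = of_int (if j = 1 then 1 else 0) *\<^sub>R column 1 A
      + of_int (if j = 1 then 0 else 1) *\<^sub>R column 2 A"
    using exhaust_2[of j] by auto
  then show ?thesis unfolding mem_lat_iff by blast
qed

lemma combination_eq_0_iff:
  assumes "det (A::real^2^2) \<noteq> 0"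
  shows "x *\<^sub>R column 1 A + y *\<^sub>R column 2 A = 0 \<longleftrightarrow> x = 0 \<and> y = 0"
proof
  assume "x *\<^sub>R column 1 A + y *\<^sub>R column 2 A = 0"
  then have "x * column 1 A $ 1 + y * column 2 A $ 1 = 0" "x * column 1 A $ 2 + y * column 2 A $ 2 = 0"
    by (simp_all add: vec2_eq_iff)
  then have "x * det A = 0" "y * det A = 0"
    unfolding det_2_columns by algebra+
  then show "x = 0 \<and> y = 0" using assms by simp
qed simp

lemma lat_mult_int_subset:
  assumes "\<forall>i j. M $ i $ j \<in> \<int>"
  shows "lat (A ** M) \<subseteq> lat A"
proof
  fix y assume "y \<in> lat (A ** M)"
  then obtain z where y: "y = (A ** M) *v (\<chi> i. real_of_int (z $ i))" unfolding lat_def by blast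
  define w :: "int^2" where "w = (\<chi> i. \<lfloor>M $ i $ 1\<rfloor> * z $ 1 + \<lfloor>M $ i $ 2\<rfloor> * z $ 2)"
  have "M *v (\<chi> i. real_of_int (z $ i)) = (\<chi> i. real_of_int (w $ i))"
    using assms unfolding vec2_eq_iff w_def by (simp add: matrix_vector_mult_2)
  then have "y = A *v (\<chi> i. real_of_int (w $ i))"
    using y by (metis matrix_vector_mul_assoc)
  then show "y \<in> lat A" unfolding lat_def by blast
qed

lemma lat_subset_imp_int_factor:
  assumes "lat B \<subseteq> lat A"
  obtains U where "\<forall>i j. U $ i $ j \<in> \<int>" "B = A ** U"
proof -
  have "\<forall>j. \<exists>p q::int. column j B = of_int p *\<^sub>R column 1 A + of_int q *\<^sub>R column 2 A"
    using assms column_in_lat mem_lat_iff by blast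
  then obtain p q :: "2 \<Rightarrow> int"
    where pq: "\<And>j. column j B = of_int (p j) *\<^sub>R column 1 A + of_int (q j) *\<^sub>R column 2 A"
    by metis
  define U :: "real^2^2" where "U = (\<chi> i j. if i = 1 then of_int (p j) else of_int (q j))"
  have "B $ i $ j = (A ** U) $ i $ j" for i j
    using arg_cong[OF pq[of j], of "\<lambda>v. v $ i"]
    by (simp add: column_nth matrix_matrix_mult_2 U_def mult.commute)
  then have "B = A ** U" by (simp add: vec_eq_iff)
  moreover have "\<forall>i j. U $ i $ j \<in> \<int>" by (simp add: U_def)
  ultimately show thesis using that by blast
qed

lemma abs_det_eq_if_lat_eq:
  assumes "det A \<noteq> 0" "lat A = lat B"
  shows "\<bar>det A\<bar> = \<bar>det B\<bar>"
proof -
  obtain U where U: "\<forall>i j. U $ i $ j \<in> \<int>" "B = A ** U"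
    using lat_subset_imp_int_factor assms(2) by (metis order_refl)
  obtain V where V: "\<forall>i j. V $ i $ j \<in> \<int>" "A = B ** V"
    using lat_subset_imp_int_factor assms(2) by (metis order_refl)
  obtain p q where pq: "det U = of_int p" "det V = of_int q"
    using U(1) V(1) by (simp add: det_2) (metis Ints_cases Ints_diff Ints_mult)
  have "det A = det A * (det U * det V)"
    using U(2) V(2) by (metis det_mul mult.assoc)
  then have "of_int (p * q) = (1::real)" using assms(1) pq by simp
  then have "\<bar>det U\<bar> = 1" using pq(1) zmult_eq_1_iff[of p q] of_int_eq_1_iff by fastforce
  then show ?thesis using U(2) by (simp add: det_mul abs_mult)
qed

lemma lattice_det_lat:
  assumes "det A \<noteq> 0"
  shows "lattice_det (lat A) = \<bar>det A\<bar>"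
proof -
  let ?B = "SOME B. det B \<noteq> 0 \<and> lat A = lat B"
  have "det ?B \<noteq> 0 \<and> lat A = lat ?B" by (rule someI[of _ A]) (use assms in auto)
  then have "\<bar>det A\<bar> = \<bar>det ?B\<bar>" using abs_det_eq_if_lat_eq[OF assms] by blast
  then show ?thesis unfolding lattice_det_def by simp
qed

definition negate_column2 :: "real^2^2 \<Rightarrow> real^2^2" where
  "negate_column2 A = (\<chi> i j. if j = 2 then - A $ i $ j else A $ i $ j)"

lemma column_negate_column2 [simp]:
  "column 1 (negate_column2 A) = column 1 A" "column 2 (negate_column2 A) = - column 2 A"
  by (simp_all add: vec2_eq_iff column_nth negate_column2_def)

lemma det_negate_column2: "det (negate_column2 A) = - det A"
  by (simp add: det_2 negate_column2_def)

lemma lat_negate_column2: "lat (negate_column2 A) = lat A"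
proof -
  have "of_int q *\<^sub>R (- v) = of_int (- q) *\<^sub>R v" for q :: int and v :: "real^2"
    by simp
  then show ?thesis
    unfolding set_eq_iff mem_lat_iff column_negate_column2 by (metis minus_minus)
qed

lemma min_basis_negate_column2: "min_basis L A \<Longrightarrow> min_basis L (negate_column2 A)"
  unfolding min_basis_def by (simp add: lat_negate_column2 det_negate_column2)

section \<open>Minimal vectors and the angle invariant\<close>

lemma norm_combination_squared:
  fixes u v :: "'a::real_inner"
  shows "(norm (x *\<^sub>R u + y *\<^sub>R v))^2 = x^2 * (norm u)^2 + y^2 * (norm v)^2 + 2 * x * y * (u \<bullet> v)"
  unfolding power2_norm_eq_inner
  by (simp add: inner_add_left inner_add_right inner_commute algebra_simps power2_eq_square)

lemma one_le_int_binary_form: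
  fixes p q :: int
  assumes "(p, q) \<noteq> (0, 0)"
  shows "1 \<le> p^2 + q^2 - \<bar>p * q\<bar>"
proof -
  have form: "p^2 + q^2 - \<bar>p * q\<bar> = (\<bar>p\<bar> - \<bar>q\<bar>)^2 + \<bar>p\<bar> * \<bar>q\<bar>"
    by (simp add: power2_eq_square abs_mult algebra_simps)
  show ?thesis
  proof (cases "p = 0 \<or> q = 0")
    case True
    then have "\<bar>p\<bar> - \<bar>q\<bar> \<noteq> 0" using assms by auto
    then have "1 \<le> (\<bar>p\<bar> - \<bar>q\<bar>)^2" by (simp add: int_one_le_iff_zero_less)
    then show ?thesis using True form by auto
  next
    case False
    then have "1 \<le> \<bar>p\<bar> * \<bar>q\<bar>" by (simp add: int_one_le_iff_zero_less)
    then show ?thesis using form by (smt (verit) zero_le_power2)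
  qed
qed

lemma norm_int_combination_ge:
  fixes u v :: "'a::real_inner"
  assumes "(norm u)^2 = \<mu>" "(norm v)^2 = \<mu>" "\<bar>u \<bullet> v\<bar> \<le> \<mu> / 2" "(p, q) \<noteq> (0, 0)"
  shows "\<mu> \<le> (norm (of_int p *\<^sub>R u + of_int q *\<^sub>R v))^2"
proof -
  let ?p = "real_of_int p" and ?q = "real_of_int q"
  have "\<bar>2 * ?p * ?q * (u \<bullet> v)\<bar> = \<bar>?p * ?q\<bar> * (2 * \<bar>u \<bullet> v\<bar>)"
    by (simp add: abs_mult)
  also have "\<dots> \<le> \<bar>?p * ?q\<bar> * \<mu>"
    using assms(3) by (intro mult_left_mono) auto
  finally have cross: "- (\<bar>?p * ?q\<bar> * \<mu>) \<le> 2 * ?p * ?q * (u \<bullet> v)"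
    by linarith
  have "\<mu> * 1 \<le> \<mu> * of_int (p^2 + q^2 - \<bar>p * q\<bar>)"
    using one_le_int_binary_form[OF assms(4)] assms(1)
    by (intro mult_left_mono) (auto simp del: of_int_diff)
  then show ?thesis
    using cross assms(1,2) by (simp add: norm_combination_squared algebra_simps)
qed

lemma min_norm_le:
  assumes "y \<in> L" "y \<noteq> 0"
  shows "min_norm L \<le> (norm y)^2"
  unfolding min_norm_def
  by (rule cInf_lower) (use assms in \<open>auto intro!: bdd_belowI[of _ 0]\<close>)

lemma min_basis_lat_if_reduced:
  assumes "det A \<noteq> 0" "(norm (column 1 A))^2 = \<mu>" "(norm (column 2 A))^2 = \<mu>"
    and "\<bar>column 1 A \<bullet> column 2 A\<bar> \<le> \<mu> / 2"
  shows "min_norm (lat A) = \<mu>" "min_basis (lat A) A"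
proof -
  have "\<mu> \<le> (norm y)^2" if "y \<in> lat A" "y \<noteq> 0" for y
  proof -
    obtain p q :: int where y: "y = of_int p *\<^sub>R column 1 A + of_int q *\<^sub>R column 2 A"
      using \<open>y \<in> lat A\<close> mem_lat_iff by blast
    with \<open>y \<noteq> 0\<close> have "(p, q) \<noteq> (0, 0)" by auto
    then show ?thesis unfolding y by (rule norm_int_combination_ge[OF assms(2-4)])
  qed
  moreover have "\<mu> \<in> {(norm y)^2 | y. y \<in> lat A \<and> y \<noteq> 0}"
    using column_in_lat combination_eq_0_iff[OF assms(1), of 1 0] assms(2) by force
  ultimately show "min_norm (lat A) = \<mu>"
    unfolding min_norm_def by (intro cInf_eq_minimum) auto
  then show "min_basis (lat A) A" unfolding min_basis_def using assms by simp
qed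

lemma min_basis_reduced:
  assumes "min_basis L A"
  shows "0 < min_norm L" "\<bar>column 1 A \<bullet> column 2 A\<bar> \<le> min_norm L / 2"
proof -
  let ?u = "column 1 A" and ?v = "column 2 A" and ?m = "min_norm L"
  have A: "det A \<noteq> 0" "L = lat A" "(norm ?u)^2 = ?m" "(norm ?v)^2 = ?m"
    using assms unfolding min_basis_def by auto
  have "?u \<noteq> 0" using combination_eq_0_iff[OF A(1), of 1 0] by simp
  then have "0 < (norm ?u)^2" by simp
  then show "0 < ?m" using A(3) by simp
  have short: "?m \<le> (norm (s *\<^sub>R ?u + ?v))^2" if s: "s = 1 \<or> s = -1" for s :: real
  proof (rule min_norm_le)
    have "s *\<^sub>R ?u + ?v = of_int (if s = 1 then 1 else -1) *\<^sub>R ?u + of_int 1 *\<^sub>R ?v"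
      using s by auto
    then show "s *\<^sub>R ?u + ?v \<in> L" unfolding A(2) mem_lat_iff by blast
    show "s *\<^sub>R ?u + ?v \<noteq> 0"
      using combination_eq_0_iff[OF A(1), of s 1] by simp
  qed
  have "?m \<le> 2 * ?m + 2 * s * (?u \<bullet> ?v)" if "s = 1 \<or> s = -1" for s :: real
    using short[OF that] that norm_combination_squared[of s ?u 1 ?v] A(3,4) by auto
  from this[of 1] this[of "-1"] show "\<bar>?u \<bullet> ?v\<bar> \<le> ?m / 2" by arith
qed

lemma det_squared_plus_inner_squared:
  "(det (A::real^2^2))^2 + (column 1 A \<bullet> column 2 A)^2 = (norm (column 1 A))^2 * (norm (column 2 A))^2"
  unfolding power2_norm_eq_inner inner_vec2 column_nth det_2
  by (simp add: algebra_simps power2_eq_square)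

text \<open>The Gram matrix of a minimal basis is determined up to the sign of its off-diagonal
  entry, since its determinant is the squared covolume.\<close>

lemma abs_inner_min_basis_unique:
  assumes "min_basis L A" "min_basis L B"
  shows "\<bar>column 1 A \<bullet> column 2 A\<bar> = \<bar>column 1 B \<bullet> column 2 B\<bar>"
proof -
  have A: "det A \<noteq> 0" "L = lat A" "(norm (column 1 A))^2 = min_norm L" "(norm (column 2 A))^2 = min_norm L"
    and B: "L = lat B" "(norm (column 1 B))^2 = min_norm L" "(norm (column 2 B))^2 = min_norm L"
    using assms unfolding min_basis_def by auto
  have "(det A)^2 = (det B)^2"
    using abs_det_eq_if_lat_eq[OF A(1)] A(2) B(1) by (metis power2_abs)
  then have "(column 1 A \<bullet> column 2 A)^2 = (column 1 B \<bullet> column 2 B)^2"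
    using det_squared_plus_inner_squared[of A] det_squared_plus_inner_squared[of B] A B by simp
  then show ?thesis by (metis real_sqrt_abs)
qed

lemma abs_inner_div_min_norm_bounds:
  assumes "min_basis L A"
  shows "0 \<le> \<bar>column 1 A \<bullet> column 2 A\<bar> / min_norm L"
    "\<bar>column 1 A \<bullet> column 2 A\<bar> / min_norm L \<le> 1 / 2"
  using min_basis_reduced[OF assms] by (auto simp: field_simps)

lemma vec_angle_min_basis:
  assumes "min_basis L A"
  shows "vec_angle (column 1 A) (column 2 A) = arccos ((column 1 A \<bullet> column 2 A) / min_norm L)"
proof -
  have "(norm (column 1 A))^2 = min_norm L" "(norm (column 2 A))^2 = min_norm L"
    using assms unfolding min_basis_def by auto
  then have "norm (column 1 A) * norm (column 2 A) = min_norm L"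
    by (metis norm_ge_zero power2_eq_square real_sqrt_mult_self real_sqrt_abs abs_of_nonneg)
  then show ?thesis unfolding vec_angle_def by simp
qed

lemma arccos_abs_inner_min_basis_bounds:
  assumes "min_basis L A"
  shows "pi/3 \<le> arccos (\<bar>column 1 A \<bullet> column 2 A\<bar> / min_norm L)"
    "arccos (\<bar>column 1 A \<bullet> column 2 A\<bar> / min_norm L) \<le> pi/2"
proof -
  note bounds = abs_inner_div_min_norm_bounds[OF assms]
  have "arccos (1/2) \<le> arccos (\<bar>column 1 A \<bullet> column 2 A\<bar> / min_norm L)"
    using bounds by (intro arccos_le_arccos) linarith+
  then show "pi/3 \<le> arccos (\<bar>column 1 A \<bullet> column 2 A\<bar> / min_norm L)"
    by (simp add: arccos_one_half)
  have "arccos (\<bar>column 1 A \<bullet> column 2 A\<bar> / min_norm L) \<le> arccos 0"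
    using bounds by (intro arccos_le_arccos) linarith+
  then show "arccos (\<bar>column 1 A \<bullet> column 2 A\<bar> / min_norm L) \<le> pi/2" by simp
qed

lemma vec_angle_min_basis_eq_if_le_pi2:
  assumes "min_basis L A" "min_basis L C" "vec_angle (column 1 C) (column 2 C) \<le> pi/2"
  shows "vec_angle (column 1 C) (column 2 C) = arccos (\<bar>column 1 A \<bullet> column 2 A\<bar> / min_norm L)"
proof -
  let ?j = "column 1 C \<bullet> column 2 C" and ?m = "min_norm L"
  have m: "0 < ?m" "\<bar>?j\<bar> \<le> ?m / 2" using min_basis_reduced[OF assms(2)] by auto
  have angle: "vec_angle (column 1 C) (column 2 C) = arccos (?j / ?m)"
    using vec_angle_min_basis[OF assms(2)] .
  have jm: "-1 \<le> ?j / ?m" "?j / ?m \<le> 1" using m by (auto simp: field_simps abs_le_iff)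
  then have "cos (vec_angle (column 1 C) (column 2 C)) = ?j / ?m"
    unfolding angle by (simp add: cos_arccos)
  moreover have "0 \<le> cos (vec_angle (column 1 C) (column 2 C))"
    using assms(3) arccos_lbound[OF jm] unfolding angle by (intro cos_ge_zero) auto
  ultimately have "0 \<le> ?j" using m(1) by (simp add: zero_le_divide_iff)
  then show ?thesis using angle abs_inner_min_basis_unique[OF assms(2,1)] by simp
qed

lemma wr_angle_min_basis:
  assumes "min_basis L A"
  shows "wr_angle L = arccos (\<bar>column 1 A \<bullet> column 2 A\<bar> / min_norm L)"
  unfolding wr_angle_def
proof (rule the_equality)
  define B where "B = (if column 1 A \<bullet> column 2 A \<ge> 0 then A else negate_column2 A)"
  have B: "min_basis L B" "column 1 B \<bullet> column 2 B = \<bar>column 1 A \<bullet> column 2 A\<bar>"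
    using assms min_basis_negate_column2 unfolding B_def by auto
  then show "\<exists>B. min_basis L B \<and> vec_angle (column 1 B) (column 2 B)
      = arccos (\<bar>column 1 A \<bullet> column 2 A\<bar> / min_norm L)
    \<and> pi/3 \<le> arccos (\<bar>column 1 A \<bullet> column 2 A\<bar> / min_norm L)
    \<and> arccos (\<bar>column 1 A \<bullet> column 2 A\<bar> / min_norm L) \<le> pi/2"
    using vec_angle_min_basis[OF B(1)] arccos_abs_inner_min_basis_bounds[OF assms] by auto
qed (use vec_angle_min_basis_eq_if_le_pi2[OF assms] in blast)

section \<open>Similar lattices\<close>

lemma lat_similarity_image: "(\<lambda>x. \<alpha> *\<^sub>R (Q *v x)) ` lat B = lat ((\<alpha> *\<^sub>R Q) ** B)"
  unfolding lat_def image_image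
  by (simp add: scaleR_matrix_vector_assoc matrix_vector_mul_assoc scalar_matrix_assoc)

lemma gram_similarity:
  fixes Q B :: "real^'n^'n"
  assumes "orthogonal_matrix Q"
  shows "transpose ((\<alpha> *\<^sub>R Q) ** B) ** ((\<alpha> *\<^sub>R Q) ** B) = \<alpha>^2 *\<^sub>R (transpose B ** B)"
proof -
  have "transpose ((\<alpha> *\<^sub>R Q) ** B) ** ((\<alpha> *\<^sub>R Q) ** B)
      = \<alpha>^2 *\<^sub>R (transpose B ** (transpose Q ** Q) ** B)"
    by (simp add: matrix_transpose_mul transpose_scalar matrix_scalar_ac
        scalar_matrix_assoc[symmetric] matrix_mul_assoc power2_eq_square)
  then show ?thesis using assms by (simp add: orthogonal_matrix)
qed

lemma gram_eq_iff_columns: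
  fixes A B :: "real^2^2"
  shows "transpose A ** A = r *\<^sub>R (transpose B ** B) \<longleftrightarrow>
    (norm (column 1 A))^2 = r * (norm (column 1 B))^2 \<and>
    (norm (column 2 A))^2 = r * (norm (column 2 B))^2 \<and>
    column 1 A \<bullet> column 2 A = r * (column 1 B \<bullet> column 2 B)"
  by (auto simp: matrix_mult_transpose_dot_column vec_eq_iff forall_2 power2_norm_eq_inner inner_commute)

lemma similar_lat_if_gram:
  fixes A B :: "real^2^2"
  assumes "det B \<noteq> 0" "0 < r" "transpose A ** A = r *\<^sub>R (transpose B ** B)"
  shows "similar_lat (lat A) (lat B)"
proof -
  obtain B' where B': "B ** B' = mat 1" "B' ** B = mat 1"
    using assms(1) invertible_det_nz[of B] unfolding invertible_def by blast
  define \<alpha> where "\<alpha> = sqrt r"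
  have \<alpha>: "0 < \<alpha>" "\<alpha> * \<alpha> = r" using assms(2) by (auto simp: \<alpha>_def)
  define Q where "Q = (1 / \<alpha>) *\<^sub>R (A ** B')"
  have "transpose Q ** Q = (1 / (\<alpha> * \<alpha>)) *\<^sub>R (transpose B' ** (transpose A ** A) ** B')"
    by (simp add: Q_def transpose_scalar matrix_transpose_mul matrix_scalar_ac
        scalar_matrix_assoc[symmetric] matrix_mul_assoc)
  also have "\<dots> = transpose (B ** B') ** (B ** B')"
    using \<alpha> assms(2,3) by (simp add: matrix_transpose_mul matrix_scalar_ac
        scalar_matrix_assoc[symmetric] matrix_mul_assoc)
  also have "\<dots> = mat 1" by (simp add: B')
  finally have "orthogonal_matrix Q" by (simp add: orthogonal_matrix)
  moreover have "(\<alpha> *\<^sub>R Q) ** B = A"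
    using \<alpha>(1) by (simp add: Q_def matrix_mul_assoc[symmetric] B' scalar_matrix_assoc[symmetric])
  ultimately show ?thesis
    unfolding similar_lat_def using lat_similarity_image[of \<alpha> Q B] \<alpha>(1) by (metis less_irrefl)
qed

lemma similar_lat_if_wr_angle_eq:
  assumes A: "min_basis L A" and B: "min_basis M B" and "wr_angle L = wr_angle M"
  shows "similar_lat L M"
proof -
  let ?iA = "column 1 A \<bullet> column 2 A" and ?iB = "column 1 B \<bullet> column 2 B"
  let ?mL = "min_norm L" and ?mM = "min_norm M"
  have unit: "\<bar>x\<bar> \<le> 1" if "0 \<le> x" "x \<le> 1 / 2" for x :: real
    using that by simp
  have "arccos (\<bar>?iA\<bar> / ?mL) = arccos (\<bar>?iB\<bar> / ?mM)"
    using assms(3) unfolding wr_angle_min_basis[OF A] wr_angle_min_basis[OF B] .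
  then have "\<bar>?iA\<bar> / ?mL = \<bar>?iB\<bar> / ?mM"
    using arccos_eq_iff unit abs_inner_div_min_norm_bounds[OF A] abs_inner_div_min_norm_bounds[OF B]
    by blast
  moreover have "0 < ?mL" "0 < ?mM" using min_basis_reduced A B by blast+
  moreover define r where "r = ?mL / ?mM"
  ultimately have r: "0 < r" "\<bar>?iA\<bar> = r * \<bar>?iB\<bar>" "?mL = r * ?mM"
    unfolding r_def by (auto simp: field_simps)
  define A' where "A' = (if (0 \<le> ?iA) = (0 \<le> ?iB) then A else negate_column2 A)"
  have A': "min_basis L A'" "column 1 A' \<bullet> column 2 A' = r * ?iB"
    using A min_basis_negate_column2 r(1,2) unfolding A'_def by (auto simp: abs_if split: if_splits)
  have "transpose A' ** A' = r *\<^sub>R (transpose B ** B)"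
    using A'(1) B A'(2) r(3) unfolding gram_eq_iff_columns min_basis_def by simp
  then have "similar_lat (lat A') (lat B)"
    using similar_lat_if_gram B r(1) unfolding min_basis_def by blast
  then show ?thesis using A'(1) B unfolding min_basis_def by simp
qed

lemma wr_angle_eq_if_similar_lat:
  assumes "similar_lat L M" and B: "min_basis M B"
  shows "wr_angle L = wr_angle M"
proof -
  obtain \<alpha> Q where \<alpha>Q: "\<alpha> \<noteq> 0" "orthogonal_matrix Q" "L = (\<lambda>x. \<alpha> *\<^sub>R (Q *v x)) ` M"
    using assms(1) unfolding similar_lat_def by blast
  define A where "A = (\<alpha> *\<^sub>R Q) ** B"
  have L: "L = lat A" using \<alpha>Q(3) B lat_similarity_image unfolding A_def min_basis_def by simp
  have "det (\<alpha> *\<^sub>R Q) = \<alpha>^2 * det Q" by (simp add: det_2 algebra_simps power2_eq_square)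
  then have "det A = \<alpha>^2 * det Q * det B" by (simp add: A_def det_mul)
  then have det: "det A \<noteq> 0"
    using \<alpha>Q(1) det_orthogonal_matrix[OF \<alpha>Q(2)] B unfolding min_basis_def by auto
  let ?iB = "column 1 B \<bullet> column 2 B" and ?mM = "min_norm M"
  have "transpose A ** A = \<alpha>^2 *\<^sub>R (transpose B ** B)"
    unfolding A_def by (rule gram_similarity[OF \<alpha>Q(2)])
  then have cols: "(norm (column 1 A))^2 = \<alpha>^2 * ?mM" "(norm (column 2 A))^2 = \<alpha>^2 * ?mM"
      "column 1 A \<bullet> column 2 A = \<alpha>^2 * ?iB"
    using B unfolding gram_eq_iff_columns min_basis_def by auto
  moreover have "\<bar>\<alpha>^2 * ?iB\<bar> \<le> \<alpha>^2 * (?mM / 2)"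
    unfolding abs_mult abs_power2 by (rule mult_left_mono) (use min_basis_reduced(2)[OF B] in auto)
  ultimately have "min_norm L = \<alpha>^2 * ?mM" "min_basis L A"
    using min_basis_lat_if_reduced[OF det] unfolding L by auto
  then show ?thesis
    using \<alpha>Q(1) cols(3) wr_angle_min_basis[OF B] wr_angle_min_basis
    by (simp add: abs_mult)
qed

lemma wr_angle_eq_iff_similar_lat:
  assumes "well_rounded L" "well_rounded M"
  shows "wr_angle L = wr_angle M \<longleftrightarrow> similar_lat L M"
proof -
  obtain A B where "min_basis L A" "min_basis M B"
    using assms unfolding well_rounded_def by blast
  then show ?thesis using similar_lat_if_wr_angle_eq wr_angle_eq_if_similar_lat by blast
qed

section \<open>The lattice \<open>\<Gamma>\<^sub>\<theta>\<close>\<close>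

lemma Lambda_h_mat_nth:
  "Lambda_h_mat $ 1 $ 1 = 1" "Lambda_h_mat $ 1 $ 2 = -1/2"
  "Lambda_h_mat $ 2 $ 1 = 0" "Lambda_h_mat $ 2 $ 2 = sqrt 3 / 2"
  by (simp_all add: Lambda_h_mat_def)

lemma det_Lambda_h_mat: "det Lambda_h_mat = sqrt 3 / 2"
  by (simp add: det_2 Lambda_h_mat_nth)

lemma Gamma_mat_nth:
  "Gamma_mat m n $ 1 $ 1 = (of_int m + of_int n) / 2"
  "Gamma_mat m n $ 1 $ 2 = (of_int m - 2 * of_int n) / 2"
  "Gamma_mat m n $ 2 $ 1 = (of_int m - of_int n) * sqrt 3 / 2"
  "Gamma_mat m n $ 2 $ 2 = of_int m * sqrt 3 / 2"
  by (simp_all add: Gamma_mat_def matrix_matrix_mult_2 Lambda_h_mat_nth field_simps)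

lemma Gamma_mat_columns:
  "(norm (column 1 (Gamma_mat m n)))^2 = of_int (m^2 - m*n + n^2)"
  "(norm (column 2 (Gamma_mat m n)))^2 = of_int (m^2 - m*n + n^2)"
  "column 1 (Gamma_mat m n) \<bullet> column 2 (Gamma_mat m n) = of_int (2*m^2 - 2*m*n - n^2) / 2"
  unfolding power2_norm_eq_inner inner_vec2 column_nth Gamma_mat_nth
  by (simp_all add: field_simps power2_eq_square)

lemma det_Gamma_mat: "det (Gamma_mat m n) = of_int (n * (2*m - n)) * sqrt 3 / 2"
  by (simp add: det_2 Gamma_mat_nth field_simps power2_eq_square)

lemma lat_Gamma_mat_subset: "lat (Gamma_mat m n) \<subseteq> Lambda_h"
  unfolding Gamma_mat_def Lambda_h_def by (rule lat_mult_int_subset) (simp add: forall_2)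

lemma abs_Gamma_inner_le:
  fixes m n :: int
  assumes "0 < n" "n \<le> m" "m \<le> 2 * n"
  shows "\<bar>2*m^2 - 2*m*n - n^2\<bar> \<le> m^2 - m*n + n^2"
proof -
  have "(m^2 - m*n + n^2) - (2*m^2 - 2*m*n - n^2) = (2*n - m) * (m + n)"
    "(m^2 - m*n + n^2) + (2*m^2 - 2*m*n - n^2) = 3 * m * (m - n)"
    by (simp_all add: power2_eq_square algebra_simps)
  moreover have "0 \<le> (2*n - m) * (m + n)" "0 \<le> 3 * m * (m - n)"
    using assms by simp_all
  ultimately show ?thesis by linarith
qed

lemma Gamma_mat_min_basis:
  fixes m n :: int
  assumes "0 < n" "n \<le> m" "m \<le> 2 * n"
  shows "min_basis (lat (Gamma_mat m n)) (Gamma_mat m n)"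
    "min_norm (lat (Gamma_mat m n)) = of_int (m^2 - m*n + n^2)"
proof -
  have "0 < n * (2*m - n)" using assms by simp
  then have "real_of_int (n * (2*m - n)) \<noteq> 0" by (simp only: of_int_eq_0_iff)
  then have det: "det (Gamma_mat m n) \<noteq> 0" unfolding det_Gamma_mat by simp
  have "of_int \<bar>2*m^2 - 2*m*n - n^2\<bar> \<le> (of_int (m^2 - m*n + n^2) :: real)"
    using abs_Gamma_inner_le[OF assms] by (simp only: of_int_le_iff)
  then have reduced: "\<bar>column 1 (Gamma_mat m n) \<bullet> column 2 (Gamma_mat m n)\<bar>
      \<le> of_int (m^2 - m*n + n^2) / 2"
    unfolding Gamma_mat_columns(3) of_int_abs by simp
  show "min_basis (lat (Gamma_mat m n)) (Gamma_mat m n)"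
    "min_norm (lat (Gamma_mat m n)) = of_int (m^2 - m*n + n^2)"
    using min_basis_lat_if_reduced[OF det Gamma_mat_columns(1,2) reduced] by auto
qed

lemma lattice_det_Gamma_mat:
  fixes m n :: int
  assumes "0 < n" "n \<le> m" "m \<le> 2 * n"
  shows "lattice_det (lat (Gamma_mat m n)) = of_int (n * (2*m - n)) * sqrt 3 / 2"
proof -
  have "lattice_det (lat (Gamma_mat m n)) = \<bar>det (Gamma_mat m n)\<bar>"
    using Gamma_mat_min_basis(1)[OF assms] lattice_det_lat unfolding min_basis_def by blast
  moreover have "0 \<le> real_of_int (n * (2*m - n))"
    by (simp only: of_int_0_le_iff) (use assms in simp)
  then have "\<bar>real_of_int (n * (2*m - n)) * sqrt 3 / 2\<bar> = real_of_int (n * (2*m - n)) * sqrt 3 / 2"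
    by (intro abs_of_nonneg divide_nonneg_pos mult_nonneg_nonneg) auto
  ultimately show ?thesis unfolding det_Gamma_mat by simp
qed

lemma lattice_det_Lambda_h: "lattice_det Lambda_h = sqrt 3 / 2"
  unfolding Lambda_h_def by (simp add: lattice_det_lat det_Lambda_h_mat)

theorem lemma4p7:
  fixes a b c m n :: int and \<theta> :: real
  assumes "primitive_eisenstein_triple a b c"
    and "m > 0" and "n > 0" and "coprime m n"
    and "n \<le> m" and "m \<le> 2 * n" and "\<not> 3 dvd (m + n)"
    and "(a, b, c) = (m * (2*n - m), n * (2*m - n), m^2 - m*n + n^2) \<or>
         (b - a, b, c) = (m * (2*n - m), n * (2*m - n), m^2 - m*n + n^2)"
    and "pi/3 \<le> \<theta>" and "\<theta> \<le> pi/2"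
    and "cos \<theta> = real_of_int \<bar>b - 2*a\<bar> / (2 * real_of_int c)"
  shows "lat (Gamma_mat m n) \<in> WR_h
    \<and> C_h \<theta> = {\<Omega> \<in> WR_h. similar_lat \<Omega> (lat (Gamma_mat m n))}
    \<and> min_norm (lat (Gamma_mat m n)) = real_of_int c
    \<and> lattice_det (lat (Gamma_mat m n)) = real_of_int b * sqrt 3 / 2
    \<and> lat_index Lambda_h (lat (Gamma_mat m n)) = real_of_int b"
proof -
  let ?\<Gamma> = "lat (Gamma_mat m n)"
  have bc: "b = n * (2*m - n)" "c = m^2 - m*n + n^2" using assms(8) by auto
  note min_basis = Gamma_mat_min_basis[OF assms(3,5,6)]
  have WR: "?\<Gamma> \<in> WR_h"
    using min_basis(1) lat_Gamma_mat_subset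
    unfolding WR_h_def well_rounded_def is_lattice_def min_basis_def by blast
  have "\<bar>b - 2*a\<bar> = \<bar>2*m^2 - 2*m*n - n^2\<bar>"
    using assms(8) by (auto simp: algebra_simps power2_eq_square abs_minus_commute)
  then have "wr_angle ?\<Gamma> = arccos (cos \<theta>)"
    using wr_angle_min_basis[OF min_basis(1)] assms(11)
    unfolding min_basis(2) Gamma_mat_columns(3) bc(2) by simp
  also have "\<dots> = \<theta>" using assms(9,10) pi_gt_zero by (intro arccos_cos) linarith+
  finally have "C_h \<theta> = {\<Omega> \<in> WR_h. similar_lat \<Omega> ?\<Gamma>}"
    using WR wr_angle_eq_iff_similar_lat unfolding C_h_def WR_h_def by auto
  moreover have det: "lattice_det ?\<Gamma> = of_int b * sqrt 3 / 2"
    using lattice_det_Gamma_mat[OF assms(3,5,6)] bc(1) by simp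
  moreover have "lat_index Lambda_h ?\<Gamma> = of_int b"
    unfolding lat_index_def det lattice_det_Lambda_h by simp
  ultimately show ?thesis
    using WR min_basis(2) bc(2) by simp
qed

end
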